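(* Let $\mathcal U$ be a critical update family, let $u\in\mathbb Q_1$ satisfy $\alpha(u)\le\alpha(\mathcal U)$, and let $Z$ be voracious with respect to $u$. Then $[\mathbb H_u\cup Z]\cap\ell_u$ is semi-periodic.
   Context: An update family is a finite collection $\mathcal U$ of finite subsets of $\mathbb Z^2\setminus\{0\}$, acting by $A_{t+1}=A_t\cup\{x:x+X\subset A_t\text{ for some }X\in\mathcal U\}$ with closure $[A]=\bigcup_tA_t$. $\mathbb Q_1$ is the set of $u\in S^1$ with rational or infinite slope. $\mathbb H_u=\{x\in\mathbb Z^2:\langle x,u\rangle<0\}$; $u$ stable if $[\mathbb H_u]=\mathbb H_u$, $\mathcal S$ the stable set. $\ell_u=\{x\in\mathbb Z^2:\langle x,u\rangle=0\}$, $\ell_u^+$ = origin plus sites of $\ell_u$ to the right of the origin looking in direction $u$, $\ell_u^-=(\ell_u\setminus\ell_u^+)\cup\{0\}$. $\alpha^\pm(u)$ = minimal $|Z|$ with $[\mathbb H_u\cup Z]\cap\ell_u^\pm$ infinite; $\alpha(u)=\min\{\alpha^+,\alpha^-\}$ if both finite, else $\infty$ (irrational $u$: $\infty$ if stable, $0$ otherwise). $\alpha(\mathcal U)=\min_C\sup_{u\in C}\alpha(u)$ over open semicircles; critical means some semicircle has finite intersection with $\mathcal S$ and every open semicircle meets $\mathcal S$. A set $Z\subset\mathbb Z^2$ with $|Z|\le\alpha(u)$ is voracious with respect to $u$ if $[\mathbb H_u\cup Z]\cap\ell_u$ is infinite. A set $Y\subset\ell_u$ is semi-periodic if $a+k\ell_u^+\subset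 Y$ or $a+k\ell_u^-\subset Y$ for some $a\in\ell_u$ and some integer $k\ge1$. *)

theory Defs
  imports Complex_Main "HOL-Library.Extended_Nat"
begin

type_synonym site = "int \<times> int"
type_synonym dir = "real \<times> real"

definition vadd :: "site \<Rightarrow> site \<Rightarrow> site" where
  "vadd x y = (fst x + fst y, snd x + snd y)"

definition vscale :: "int \<Rightarrow> site \<Rightarrow> site" where
  "vscale k x = (k * fst x, k * snd x)"

definition update_family :: "site set set \<Rightarrow> bool" where
  "update_family U \<longleftrightarrow> finite U \<and> (\<forall>X\<in>U. finite X \<and> (0,0) \<notin> X)"

definition step :: "site set set \<Rightarrow> site set \<Rightarrow> site set" where
  "step U A = A \<union> {x. \<exists>X\<in>U. vadd x ` X \<subseteq> A}"

definition closure_U :: "site set set \<Rightarrow> site set \<Rightarrow> site set" where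
  "closure_U U A = (\<Union>t::nat. (step U ^^ t) A)"

definition S1 :: "dir set" where
  "S1 = {u. (fst u)\<^sup>2 + (snd u)\<^sup>2 = 1}"

definition Q1 :: "dir set" where
  "Q1 = {u \<in> S1. fst u = 0 \<or> snd u / fst u \<in> \<rat>}"

definition ip :: "site \<Rightarrow> dir \<Rightarrow> real" where
  "ip x u = real_of_int (fst x) * fst u + real_of_int (snd x) * snd u"

definition halfplane :: "dir \<Rightarrow> site set" where
  "halfplane u = {x. ip x u < 0}"

definition stable :: "site set set \<Rightarrow> dir \<Rightarrow> bool" where
  "stable U u \<longleftrightarrow> closure_U U (halfplane u) = halfplane u"

definition stable_set :: "site set set \<Rightarrow> dir set" where
  "stable_set U = {u \<in> S1. stable U u}"

definition line :: "dir \<Rightarrow> site set" where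
  "line u = {x. ip x u = 0}"

text \<open>Looking in direction u, the right-hand direction is (snd u, - fst u).\<close>
definition line_plus :: "dir \<Rightarrow> site set" where
  "line_plus u = {x \<in> line u. ip x (snd u, - fst u) \<ge> 0}"

definition line_minus :: "dir \<Rightarrow> site set" where
  "line_minus u = (line u - line_plus u) \<union> {(0,0)}"

definition ecard :: "'a set \<Rightarrow> enat" where
  "ecard Z = (if finite Z then enat (card Z) else \<infinity>)"

definition alpha_plus :: "site set set \<Rightarrow> dir \<Rightarrow> enat" where
  "alpha_plus U u = Inf {ecard Z | Z.
      infinite (closure_U U (halfplane u \<union> Z) \<inter> line_plus u)}"

definition alpha_minus :: "site set set \<Rightarrow> dir \<Rightarrow> enat" where
  "alpha_minus U u = Inf {ecard Z | Z.
      infinite (closure_U U (halfplane u \<union> Z) \<inter> line_minus u)}"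

definition alpha :: "site set set \<Rightarrow> dir \<Rightarrow> enat" where
  "alpha U u =
     (if u \<in> Q1 then
        (if alpha_plus U u \<noteq> \<infinity> \<and> alpha_minus U u \<noteq> \<infinity>
         then min (alpha_plus U u) (alpha_minus U u) else \<infinity>)
      else (if stable U u then \<infinity> else 0))"

definition semicircle :: "dir \<Rightarrow> dir set" where
  "semicircle v = {w \<in> S1. fst w * fst v + snd w * snd v > 0}"

definition alpha_family :: "site set set \<Rightarrow> enat" where
  "alpha_family U = (INF v\<in>S1. SUP u\<in>semicircle v. alpha U u)"

definition critical :: "site set set \<Rightarrow> bool" where
  "critical U \<longleftrightarrow>
     (\<exists>v\<in>S1. finite (semicircle v \<inter> stable_set U)) \<and>
     (\<forall>v\<in>S1. semicircle v \<inter> stable_set U \<noteq> {})"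

definition voracious :: "site set set \<Rightarrow> dir \<Rightarrow> site set \<Rightarrow> bool" where
  "voracious U u Z \<longleftrightarrow> ecard Z \<le> alpha U u \<and>
     infinite (closure_U U (halfplane u \<union> Z) \<inter> line u)"

definition semi_periodic :: "dir \<Rightarrow> site set \<Rightarrow> bool" where
  "semi_periodic u Y \<longleftrightarrow> Y \<subseteq> line u \<and>
     (\<exists>a\<in>line u. \<exists>k::int. k \<ge> 1 \<and>
        ((vadd a \<circ> vscale k) ` line_plus u \<subseteq> Y \<or>
         (vadd a \<circ> vscale k) ` line_minus u \<subseteq> Y))"

end

theory Submission
  imports Defs
begin

text \<open>
  If u is unstable, some rule lies inside H_u and infects all of l_u, so Y = l_u.  Otherwise:
  (1) Criticality makes alpha(U) finite.  Take a semicircle C with finitely many stable directions.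
      Stable directions in C are rational (a stable irrational direction has a whole arc of stable
      neighbours), and rotating one slightly to either side gives an unstable direction whose rule
      eats along l_u from a finite seed; so their alpha is finite, while unstable directions have
      alpha 0.  Hence |Z| \<le> alpha(u) \<le> alpha(U) forces Z to be finite.
  (2) For stable u and finite Z the set A has bounded height above l_u, and since Y is infinite,
      A is unbounded along l_u in the direction of some site e.  Beyond the seed, A is determined
      by a bounded window behind each level; only finitely many window shapes occur, so two windows
      are translates of each other, and A is invariant under this translation beyond some level.
      Thus Y contains an infinite arithmetic progression in the direction e.
  (3) A subset of l_u containing such a progression is semi-periodic.
\<close>

section \<open>The closure operator\<close>

definition closed_under :: "site set set \<Rightarrow> site set \<Rightarrow> bool" where
  "closed_under U C \<longleftrightarrow> (\<forall>x. \<forall>X\<in>U. vadd x ` X \<subseteq> C \<longrightarrow> x \<in> C)"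

lemma step_superset: "A \<subseteq> step U A"
  by (auto simp: step_def)

lemma funpow_step_mono: "m \<le> n \<Longrightarrow> (step U ^^ m) A \<subseteq> (step U ^^ n) A"
  by (rule lift_Suc_mono_le[of "\<lambda>t. (step U ^^ t) A"]) (simp_all add: step_superset)

lemma closure_U_superset: "S \<subseteq> closure_U U S"
  unfolding closure_U_def by (metis UNIV_I UN_upper funpow_0)

lemma closure_U_least:
  assumes "closed_under U C" and "S \<subseteq> C"
  shows "closure_U U S \<subseteq> C"
proof -
  have "(step U ^^ t) S \<subseteq> C" for t
  proof (induction t)
    case 0
    then show ?case using assms(2) by simp
  next
    case (Suc t)
    then show ?case
      using assms(1) unfolding closed_under_def by (auto simp: step_def) blast
  qed
  then show ?thesis unfolding closure_U_def by blast
qed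

text \<open>Closedness of the closure needs finiteness of the rules: a rule contained in the
  closure is already contained in some finite stage of the iteration.\<close>

lemma closure_U_closed:
  assumes "update_family U"
  shows "closed_under U (closure_U U S)"
  unfolding closed_under_def
proof (intro allI ballI impI)
  fix x X
  assume X: "X \<in> U" and sub: "vadd x ` X \<subseteq> closure_U U S"
  have "finite (vadd x ` X)" using assms X unfolding update_family_def by auto
  then have "\<exists>T. vadd x ` X \<subseteq> (step U ^^ T) S"
    using sub
  proof (induction rule: finite_induct)
    case empty
    then show ?case by auto
  next
    case (insert y F)
    then obtain T T' where "F \<subseteq> (step U ^^ T) S" "y \<in> (step U ^^ T') S"
      unfolding closure_U_def by auto
    then show ?case
      using funpow_step_mono[of T "max T T'" U S] funpow_step_mono[of T' "max T T'" U S]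
      by (intro exI[of _ "max T T'"]) auto
  qed
  then obtain T where "vadd x ` X \<subseteq> (step U ^^ T) S" by blast
  then have "x \<in> (step U ^^ Suc T) S" using X by (auto simp: step_def)
  then show "x \<in> closure_U U S" unfolding closure_U_def by blast
qed

lemma closure_U_subset_closure:
  assumes "update_family U" and "S \<subseteq> closure_U U T"
  shows "closure_U U S \<subseteq> closure_U U T"
  using closure_U_least[OF closure_U_closed[OF assms(1)] assms(2)] .

lemma closure_U_infects:
  assumes "update_family U" and "X \<in> U" and "vadd x ` X \<subseteq> closure_U U S"
  shows "x \<in> closure_U U S"
  using closure_U_closed[OF assms(1)] assms(2,3) unfolding closed_under_def by blast

section \<open>Translations\<close>

lemma ip_vadd [simp]: "ip (vadd x y) u = ip x u + ip y u"
  by (simp add: ip_def vadd_def algebra_simps)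

lemma ip_vscale [simp]: "ip (vscale k x) u = of_int k * ip x u"
  by (simp add: ip_def vscale_def algebra_simps)

lemma vadd_0 [simp]: "vadd (0,0) x = x"
  by (simp add: vadd_def)

lemma vadd_image_vadd: "vadd a ` vadd b ` S = vadd (vadd a b) ` S"
  by (simp add: image_image vadd_def add.assoc)

lemma vadd_neg_cancel: "vadd (-fst v, -snd v) (vadd v x) = x" "vadd v (vadd (-fst v, -snd v) x) = x"
  by (simp_all add: vadd_def)

lemma vscale_add: "vadd (vscale a e) (vscale b e) = vscale (a + b) e"
  by (simp add: vadd_def vscale_def algebra_simps)

lemma vscale_vscale: "vscale a (vscale b x) = vscale (a * b) x"
  by (simp add: vscale_def algebra_simps)

lemma closed_under_translate:
  assumes "closed_under U C"
  shows "closed_under U (vadd v ` C)"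
  unfolding closed_under_def
proof (intro allI ballI impI)
  fix x X
  assume X: "X \<in> U" and sub: "vadd x ` X \<subseteq> vadd v ` C"
  let ?x' = "vadd (-fst v, -snd v) x"
  have "vadd ?x' ` X \<subseteq> C"
  proof
    fix z assume "z \<in> vadd ?x' ` X"
    then obtain y where y: "y \<in> X" "z = vadd ?x' y" by auto
    then obtain c where "c \<in> C" "vadd x y = vadd v c" using sub by blast
    moreover have "z = c" using y \<open>vadd x y = vadd v c\<close> by (auto simp: vadd_def prod_eq_iff)
    ultimately show "z \<in> C" by simp
  qed
  then have "?x' \<in> C" using assms X unfolding closed_under_def by blast
  then show "x \<in> vadd v ` C" by (metis rev_image_eqI vadd_neg_cancel(2))
qed

lemma closure_U_translate_subset:
  assumes "update_family U"
  shows "closure_U U (vadd v ` S) \<subseteq> vadd v ` closure_U U S"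
  by (rule closure_U_least[OF closed_under_translate[OF closure_U_closed[OF assms]]])
    (use closure_U_superset in blast)

lemma closure_U_translate:
  assumes "update_family U"
  shows "closure_U U (vadd v ` S) = vadd v ` closure_U U S"
proof
  show "closure_U U (vadd v ` S) \<subseteq> vadd v ` closure_U U S"
    using closure_U_translate_subset[OF assms] .
  let ?w = "(-fst v, -snd v)"
  have "vadd ?w ` vadd v ` S = S" by (simp add: image_image vadd_neg_cancel)
  then have "closure_U U S \<subseteq> vadd ?w ` closure_U U (vadd v ` S)"
    using closure_U_translate_subset[OF assms, of ?w "vadd v ` S"] by simp
  then have "vadd v ` closure_U U S \<subseteq> vadd v ` vadd ?w ` closure_U U (vadd v ` S)" by blast
  also have "\<dots> = closure_U U (vadd v ` S)" by (simp add: image_image vadd_neg_cancel)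
  finally show "vadd v ` closure_U U S \<subseteq> closure_U U (vadd v ` S)" .
qed

section \<open>Stable directions\<close>

lemma stable_iff:
  assumes "update_family U"
  shows "stable U u \<longleftrightarrow> (\<forall>X\<in>U. \<exists>y\<in>X. 0 \<le> ip y u)"
proof
  assume st: "stable U u"
  show "\<forall>X\<in>U. \<exists>y\<in>X. 0 \<le> ip y u"
  proof (rule ccontr)
    assume "\<not> ?thesis"
    then obtain X where X: "X \<in> U" "\<forall>y\<in>X. ip y u < 0" by (auto simp: not_le)
    then have "vadd (0,0) ` X \<subseteq> closure_U U (halfplane u)"
      using closure_U_superset[of "halfplane u" U] by (auto simp: halfplane_def)
    then have "(0,0) \<in> closure_U U (halfplane u)"
      by (rule closure_U_infects[OF assms X(1)])
    then have "(0,0) \<in> halfplane u"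
      using st by (simp add: stable_def)
    then show False by (simp add: halfplane_def ip_def)
  qed
next
  assume h: "\<forall>X\<in>U. \<exists>y\<in>X. 0 \<le> ip y u"
  have "closed_under U (halfplane u)"
    unfolding closed_under_def halfplane_def
  proof (intro allI ballI impI)
    fix x X
    assume "X \<in> U" and sub: "vadd x ` X \<subseteq> {x. ip x u < 0}"
    then obtain y where "y \<in> X" "0 \<le> ip y u" using h by blast
    moreover from this(1) have "ip (vadd x y) u < 0" using sub by blast
    ultimately show "x \<in> {x. ip x u < 0}" by simp
  qed
  then have "closure_U U (halfplane u) \<subseteq> halfplane u" by (rule closure_U_least) simp
  then show "stable U u" unfolding stable_def using closure_U_superset by blast
qed

text \<open>If u is unstable, a rule inside H_u infects every site of the line l_u at once.\<close>

lemma unstable_line: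
  assumes "update_family U" and "\<not> stable U u"
  shows "line u \<subseteq> closure_U U (halfplane u \<union> Z)"
proof
  fix x assume x: "x \<in> line u"
  obtain X where X: "X \<in> U" "\<forall>y\<in>X. ip y u < 0"
    using assms stable_iff by (meson not_le)
  have "vadd x ` X \<subseteq> halfplane u"
    using X(2) x by (auto simp: halfplane_def line_def)
  then show "x \<in> closure_U U (halfplane u \<union> Z)"
    using closure_U_infects[OF assms(1) X(1)] closure_U_superset[of "halfplane u \<union> Z" U] by blast
qed

section \<open>Lattice geometry of the line l_u\<close>

text \<open>The unit vector pointing to the right of u; it orients l_u, with l_u^+ on its positive side.\<close>

abbreviation rdir :: "dir \<Rightarrow> dir" where
  "rdir u \<equiv> (snd u, - fst u)"

lemma coords_in_frame:
  assumes "u \<in> S1"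
  shows "real_of_int (fst x) = fst u * ip x u + snd u * ip x (rdir u)"
    and "real_of_int (snd x) = snd u * ip x u - fst u * ip x (rdir u)"
proof -
  have h: "(fst u)\<^sup>2 + (snd u)\<^sup>2 = 1" using assms by (simp add: S1_def)
  have "fst u * ip x u + snd u * ip x (rdir u) = real_of_int (fst x) * ((fst u)\<^sup>2 + (snd u)\<^sup>2)"
    by (simp add: ip_def algebra_simps power2_eq_square)
  then show "real_of_int (fst x) = fst u * ip x u + snd u * ip x (rdir u)" using h by simp
  have "snd u * ip x u - fst u * ip x (rdir u) = real_of_int (snd x) * ((fst u)\<^sup>2 + (snd u)\<^sup>2)"
    by (simp add: ip_def algebra_simps power2_eq_square)
  then show "real_of_int (snd x) = snd u * ip x u - fst u * ip x (rdir u)" using h by simp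
qed

lemma S1_coord_bounds:
  assumes "u \<in> S1"
  shows "\<bar>fst u\<bar> \<le> 1" "\<bar>snd u\<bar> \<le> 1"
proof -
  have "(fst u)\<^sup>2 + (snd u)\<^sup>2 = 1" using assms by (simp add: S1_def)
  then have "(fst u)\<^sup>2 \<le> 1" "(snd u)\<^sup>2 \<le> 1"
    using zero_le_power2[of "fst u"] zero_le_power2[of "snd u"] by linarith+
  then show "\<bar>fst u\<bar> \<le> 1" "\<bar>snd u\<bar> \<le> 1" by (simp_all add: abs_square_le_1)
qed

lemma box_finite:
  assumes "u \<in> S1"
  shows "finite {x. \<bar>ip x u\<bar> \<le> B1 \<and> \<bar>ip x (rdir u)\<bar> \<le> B2}"
proof -
  let ?N = "ceiling (B1 + B2)"
  have "{x. \<bar>ip x u\<bar> \<le> B1 \<and> \<bar>ip x (rdir u)\<bar> \<le> B2} \<subseteq> {-?N..?N} \<times> {-?N..?N}"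
  proof
    fix x assume x: "x \<in> {x. \<bar>ip x u\<bar> \<le> B1 \<and> \<bar>ip x (rdir u)\<bar> \<le> B2}"
    have b: "\<bar>fst u\<bar> \<le> 1" "\<bar>snd u\<bar> \<le> 1" using S1_coord_bounds assms by auto
    have "\<bar>c * ip x u\<bar> \<le> B1" "\<bar>c * ip x (rdir u)\<bar> \<le> B2" if "\<bar>c\<bar> \<le> 1" for c
      using x that by (simp_all add: abs_mult) (meson abs_ge_zero mult_left_le_one_le order_trans)+
    then have "\<bar>real_of_int (fst x)\<bar> \<le> B1 + B2" "\<bar>real_of_int (snd x)\<bar> \<le> B1 + B2"
      using coords_in_frame[OF assms, of x] b by (smt (verit))+
    then have "real_of_int \<bar>fst x\<bar> \<le> real_of_int ?N" "real_of_int \<bar>snd x\<bar> \<le> real_of_int ?N"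
      using le_of_int_ceiling[of "B1 + B2"] by linarith+
    then have "\<bar>fst x\<bar> \<le> ?N" "\<bar>snd x\<bar> \<le> ?N" by (simp_all only: of_int_le_iff)
    then show "x \<in> {-?N..?N} \<times> {-?N..?N}" by (auto simp: mem_Times_iff abs_le_iff)
  qed
  then show ?thesis by (rule finite_subset) simp
qed

lemma line_vadd: "x \<in> line u \<Longrightarrow> y \<in> line u \<Longrightarrow> vadd x y \<in> line u"
  by (simp add: line_def)

lemma line_vscale: "x \<in> line u \<Longrightarrow> vscale k x \<in> line u"
  by (simp add: line_def)

lemma line_coord_zero:
  assumes "u \<in> S1" "x \<in> line u" "ip x (rdir u) = 0"
  shows "x = (0,0)"
  using coords_in_frame[OF assms(1), of x] assms(2,3) by (simp add: line_def prod_eq_iff)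

lemma line_plus_eq: "line_plus u = {x \<in> line u. 0 \<le> ip x (rdir u)}"
  by (simp add: line_plus_def)

lemma line_minus_eq:
  assumes "u \<in> S1"
  shows "line_minus u = {x \<in> line u. ip x (rdir u) \<le> 0}"
  using line_coord_zero[OF assms] by (auto simp: line_minus_def line_plus_def line_def ip_def)

lemma line_dir:
  assumes "u \<in> Q1"
  shows "\<exists>e\<in>line u. 0 < ip e (rdir u)"
proof -
  have "\<exists>e\<in>line u. ip e (rdir u) \<noteq> 0"
  proof (cases "fst u = 0")
    case True
    then show ?thesis using assms by (intro bexI[of _ "(1,0)"]) (auto simp: line_def ip_def Q1_def S1_def)
  next
    case False
    then obtain r where r: "snd u / fst u = of_rat r" using assms by (auto simp: Q1_def Rats_def)
    obtain a b where ab: "r = Fract a b" "b > 0" by (cases r) auto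
    have "snd u / fst u = of_int a / of_int b" using r ab by (simp add: of_rat_rat)
    then have "snd u * of_int b = fst u * of_int a" using False ab by (simp add: field_simps)
    then have "(a, -b) \<in> line u" by (simp add: line_def ip_def algebra_simps)
    moreover have "(a, -b) \<noteq> (0,0)" using ab by simp
    moreover have "u \<in> S1" using assms by (simp add: Q1_def)
    ultimately have "ip (a, -b) (rdir u) \<noteq> 0" using line_coord_zero by blast
    then show ?thesis using \<open>(a, -b) \<in> line u\<close> by blast
  qed
  then obtain e where e: "e \<in> line u" "ip e (rdir u) \<noteq> 0" by blast
  show ?thesis
  proof (cases "0 < ip e (rdir u)")
    case False
    then show ?thesis using e line_vscale[OF e(1), of "-1"] by (intro bexI[of _ "vscale (-1) e"]) auto
  qed (use e in blast)
qed

lemma infinite_halfline: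
  assumes "u \<in> Q1" and "c \<noteq> 0"
  shows "infinite {x \<in> line u. 0 \<le> c * ip x (rdir u)}"
proof
  assume fin: "finite {x \<in> line u. 0 \<le> c * ip x (rdir u)}"
  obtain e0 where e0: "e0 \<in> line u" "0 < ip e0 (rdir u)" using line_dir[OF assms(1)] by blast
  define e where "e = vscale (if 0 < c then 1 else -1) e0"
  have e: "e \<in> line u" "0 < c * ip e (rdir u)"
    using e0 assms(2) line_vscale by (auto simp: e_def zero_less_mult_iff)
  have "0 \<le> c * (real n * ip e (rdir u))" for n
    using e(2) by (metis less_imp_le mult.left_commute mult_nonneg_nonneg of_nat_0_le_iff)
  then have "0 \<le> c * ip (vscale (int n) e) (rdir u)" for n
    by simp
  then have "range (\<lambda>n::nat. vscale (int n) e) \<subseteq> {x \<in> line u. 0 \<le> c * ip x (rdir u)}"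
    using line_vscale[OF e(1)] by auto
  moreover have "inj (\<lambda>n::nat. vscale (int n) e)"
  proof (rule injI)
    fix m n :: nat assume "vscale (int m) e = vscale (int n) e"
    then have "real m * ip e (rdir u) = real n * ip e (rdir u)"
      by (metis ip_vscale of_int_of_nat_eq)
    then show "m = n" using e(2) by auto
  qed
  ultimately show False using fin by (meson finite_imageD finite_subset infinite_UNIV_nat)
qed

lemma line_det_zero:
  assumes "u \<in> S1" "e \<in> line u" "x \<in> line u"
  shows "fst e * snd x = snd e * fst x"
proof -
  define d where "d = fst e * snd x - snd e * fst x"
  have "real_of_int d * fst u = of_int (snd x) * ip e u - of_int (snd e) * ip x u"
    "real_of_int d * snd u = of_int (fst e) * ip x u - of_int (fst x) * ip e u"
    by (simp_all add: d_def ip_def algebra_simps)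
  then have "real_of_int d * fst u = 0" "real_of_int d * snd u = 0"
    using assms(2,3) by (simp_all add: line_def)
  moreover have "fst u \<noteq> 0 \<or> snd u \<noteq> 0" using assms(1) by (auto simp: S1_def)
  ultimately have "d = 0" by auto
  then show ?thesis by (simp add: d_def)
qed

lemma halfline_multiple:
  assumes uS: "u \<in> S1" and e: "e \<in> line u" "ip e (rdir u) \<noteq> 0"
  shows "\<exists>N::int. 1 \<le> N \<and> (\<forall>x\<in>line u. 0 \<le> ip x (rdir u) * ip e (rdir u) \<longrightarrow>
           (\<exists>c::nat. vscale N x = vscale (int c) e))"
proof -
  define N0 where "N0 = (if fst e \<noteq> 0 then fst e else snd e)"
  have "e \<noteq> (0,0)" using e(2) by (auto simp: ip_def)
  then have N0: "N0 \<noteq> 0" by (auto simp: N0_def prod_eq_iff)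
  have "\<exists>c::nat. vscale \<bar>N0\<bar> x = vscale (int c) e"
    if x: "x \<in> line u" "0 \<le> ip x (rdir u) * ip e (rdir u)" for x
  proof -
    define c0 where "c0 = sgn N0 * (if fst e \<noteq> 0 then fst x else snd x)"
    have "vscale N0 x = vscale (sgn N0 * c0) e"
      using line_det_zero[OF uS e(1) x(1)] N0
      by (auto simp: N0_def c0_def vscale_def prod_eq_iff algebra_simps sgn_if)
    then have eq: "vscale \<bar>N0\<bar> x = vscale c0 e"
      using N0 by (auto simp: vscale_def abs_if sgn_if prod_eq_iff)
    then have "of_int \<bar>N0\<bar> * ip x (rdir u) * ip e (rdir u) = of_int c0 * (ip e (rdir u))\<^sup>2"
      by (metis ip_vscale mult.assoc power2_eq_square)
    moreover have "0 \<le> of_int \<bar>N0\<bar> * ip x (rdir u) * ip e (rdir u)"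
      using x(2) by (simp add: mult.assoc)
    ultimately have "0 \<le> c0" using e(2) by (simp add: zero_le_mult_iff)
    then show ?thesis using eq by (intro exI[of _ "nat c0"]) simp
  qed
  then show ?thesis using N0 by (intro exI[of _ "\<bar>N0\<bar>"]) auto
qed

section \<open>Critical families have finite alpha\<close>

text \<open>Rotating u by the angle arctan t gives rt u t.  Rotations are used to probe the directions
  near a stable direction u of a semicircle containing only finitely many stable directions.\<close>

definition rt :: "dir \<Rightarrow> real \<Rightarrow> dir" where
  "rt u t = ((fst u - t * snd u) / sqrt (1 + t\<^sup>2), (snd u + t * fst u) / sqrt (1 + t\<^sup>2))"

lemma sqrt_one_plus_sq_pos: "0 < sqrt (1 + t\<^sup>2)"
  by (simp add: add_pos_nonneg)

lemma rt_S1: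
  assumes "u \<in> S1"
  shows "rt u t \<in> S1"
proof -
  have "(fst u - t * snd u)\<^sup>2 + (snd u + t * fst u)\<^sup>2 = (1 + t\<^sup>2) * ((fst u)\<^sup>2 + (snd u)\<^sup>2)"
    by (simp add: power2_eq_square algebra_simps)
  also have "\<dots> = (sqrt (1 + t\<^sup>2))\<^sup>2" using assms by (simp add: S1_def add_nonneg_nonneg)
  finally show ?thesis
    using sqrt_one_plus_sq_pos[of t] by (simp add: S1_def rt_def power_divide add_divide_distrib[symmetric])
qed

lemma ip_rt: "ip y (rt u t) = (ip y u - t * ip y (rdir u)) / sqrt (1 + t\<^sup>2)"
  using sqrt_one_plus_sq_pos[of t] by (simp add: ip_def rt_def field_simps)

lemma rt_inner:
  "fst (rt u t) * fst v + snd (rt u t) * snd v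
     = ((fst u * fst v + snd u * snd v) + t * (fst u * snd v - snd u * fst v)) / sqrt (1 + t\<^sup>2)"
  using sqrt_one_plus_sq_pos[of t] by (simp add: rt_def field_simps)

lemma rt_inj:
  assumes "u \<in> S1"
  shows "inj (rt u)"
proof (rule injI)
  fix t s assume eq: "rt u t = rt u s"
  have tan: "fst (rt u r) * (- snd u) + snd (rt u r) * fst u = r / sqrt (1 + r\<^sup>2)" for r
  proof -
    have "fst (rt u r) * (- snd u) + snd (rt u r) * fst u
        = r * ((fst u)\<^sup>2 + (snd u)\<^sup>2) / sqrt (1 + r\<^sup>2)"
      using sqrt_one_plus_sq_pos[of r] by (simp add: rt_def field_simps power2_eq_square)
    then show ?thesis using assms by (simp add: S1_def)
  qed
  have "t / sqrt (1 + t\<^sup>2) = s / sqrt (1 + s\<^sup>2)" using tan[of t] tan[of s] eq by simp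
  then have e: "t * sqrt (1 + s\<^sup>2) = s * sqrt (1 + t\<^sup>2)"
    using sqrt_one_plus_sq_pos[of t] sqrt_one_plus_sq_pos[of s] by (simp add: field_simps)
  then have "(t * sqrt (1 + s\<^sup>2))\<^sup>2 = (s * sqrt (1 + t\<^sup>2))\<^sup>2" by simp
  then have "t\<^sup>2 * (1 + s\<^sup>2) = s\<^sup>2 * (1 + t\<^sup>2)" by (simp add: power_mult_distrib add_nonneg_nonneg)
  then have "t = s \<or> t = - s" by (simp add: algebra_simps power2_eq_iff)
  moreover have "s = 0" if "t = - s"
    using e that sqrt_one_plus_sq_pos[of s] by simp
  ultimately show "t = s" by auto
qed

lemma small_perturbation:
  assumes "finite I" "\<forall>i\<in>I. (0::real) < a i"
  shows "\<exists>\<tau>>0. \<forall>t. \<bar>t\<bar> < \<tau> \<longrightarrow> (\<forall>i\<in>I. 0 < a i + t * b i)"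
  using assms
proof (induction rule: finite_induct)
  case empty
  then show ?case by (intro exI[of _ 1]) auto
next
  case (insert j I)
  obtain \<tau> where \<tau>: "0 < \<tau>" "\<forall>t. \<bar>t\<bar> < \<tau> \<longrightarrow> (\<forall>i\<in>I. 0 < a i + t * b i)"
    using insert by auto
  define \<tau>' where "\<tau>' = min \<tau> (a j / (\<bar>b j\<bar> + 1))"
  have "0 < a j + t * b j" if "\<bar>t\<bar> < \<tau>'" for t
  proof -
    have "\<bar>t\<bar> * (\<bar>b j\<bar> + 1) < a j"
      using that by (simp add: \<tau>'_def pos_less_divide_eq add_pos_nonneg)
    then have "\<bar>t * b j\<bar> < a j" by (simp add: abs_mult algebra_simps)
    then show ?thesis by linarith
  qed
  moreover have "0 < \<tau>'" using \<tau> insert.prems by (simp add: \<tau>'_def)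
  ultimately show ?case using \<tau> by (intro exI[of _ \<tau>']) (auto simp: \<tau>'_def)
qed

lemma ip_irrational_nonzero:
  assumes "u \<in> S1" "u \<notin> Q1" "y \<noteq> (0,0)"
  shows "ip y u \<noteq> 0"
proof
  assume h: "ip y u = 0"
  have f: "fst u \<noteq> 0" and r: "snd u / fst u \<notin> \<rat>" using assms by (auto simp: Q1_def)
  have h': "real_of_int (fst y) * fst u + real_of_int (snd y) * snd u = 0" using h by (simp add: ip_def)
  show False
  proof (cases "snd y = 0")
    case True
    then show False using h' f assms(3) by (simp add: prod_eq_iff)
  next
    case False
    then have "snd u / fst u = - of_int (fst y) / of_int (snd y)" using h' f
      by (simp add: field_simps)
    then show False using r by simp
  qed
qed

lemma small_rotation:
  assumes "update_family U" and u: "u \<in> semicircle v"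
  shows "\<exists>\<tau>>0. \<forall>t. \<bar>t\<bar> < \<tau> \<longrightarrow> rt u t \<in> semicircle v \<and>
           (\<forall>y\<in>\<Union>U. 0 < ip y u \<longrightarrow> 0 < ip y (rt u t))"
proof -
  have uS: "u \<in> S1" using u by (simp add: semicircle_def)
  have "finite (\<Union>U)" using assms(1) by (auto simp: update_family_def)
  then have "finite {y\<in>\<Union>U. 0 < ip y u}" by (rule finite_subset[rotated]) blast
  then have "\<exists>\<tau>>0. \<forall>t. \<bar>t\<bar> < \<tau> \<longrightarrow>
      (\<forall>y\<in>{y\<in>\<Union>U. 0 < ip y u}. 0 < ip y u + t * (- ip y (rdir u)))"
    by (rule small_perturbation) simp
  then obtain \<tau>1 where \<tau>1: "0 < \<tau>1"
      "\<forall>t. \<bar>t\<bar> < \<tau>1 \<longrightarrow> (\<forall>y\<in>{y\<in>\<Union>U. 0 < ip y u}. 0 < ip y u + t * (- ip y (rdir u)))"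
    by blast
  have "0 < fst u * fst v + snd u * snd v" using u by (simp add: semicircle_def)
  then obtain \<tau>2 where \<tau>2: "0 < \<tau>2" "\<forall>t. \<bar>t\<bar> < \<tau>2 \<longrightarrow>
      0 < fst u * fst v + snd u * snd v + t * (fst u * snd v - snd u * fst v)"
    using small_perturbation[of "{v}" "\<lambda>_. fst u * fst v + snd u * snd v"
        "\<lambda>_. fst u * snd v - snd u * fst v"] by auto
  have "rt u t \<in> semicircle v \<and> (\<forall>y\<in>\<Union>U. 0 < ip y u \<longrightarrow> 0 < ip y (rt u t))"
    if t: "\<bar>t\<bar> < min \<tau>1 \<tau>2" for t
  proof -
    have "0 < fst u * fst v + snd u * snd v + t * (fst u * snd v - snd u * fst v)"
      using \<tau>2(2) t by simp
    moreover have "0 < ip y u - t * ip y (rdir u)" if "y \<in> \<Union>U" "0 < ip y u" for y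
      using \<tau>1(2)[rule_format, of t y] t that by simp
    ultimately show ?thesis
      using rt_S1[OF uS] sqrt_one_plus_sq_pos[of t] by (simp add: semicircle_def rt_inner ip_rt)
  qed
  moreover have "0 < min \<tau>1 \<tau>2" using \<tau>1(1) \<tau>2(1) by simp
  ultimately show ?thesis by blast
qed

lemma unstable_rotation:
  assumes uf: "update_family U" and u: "u \<in> semicircle v"
    and fin: "finite (semicircle v \<inter> stable_set U)" and s: "\<bar>s\<bar> = (1::real)"
  shows "\<exists>t. 0 < s * t \<and> \<not> stable U (rt u t) \<and> (\<forall>y\<in>\<Union>U. 0 < ip y u \<longrightarrow> 0 < ip y (rt u t))"
proof -
  have uS: "u \<in> S1" using u by (simp add: semicircle_def)
  obtain \<tau> where \<tau>: "0 < \<tau>" "\<forall>t. \<bar>t\<bar> < \<tau> \<longrightarrow> rt u t \<in> semicircle v \<and>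
      (\<forall>y\<in>\<Union>U. 0 < ip y u \<longrightarrow> 0 < ip y (rt u t))"
    using small_rotation[OF uf u] by blast
  let ?T = "{t. 0 < s * t \<and> \<bar>t\<bar> < \<tau>}"
  have "s = 1 \<or> s = -1" using s by (cases "0 \<le> s") auto
  then have "infinite ?T"
  proof
    assume "s = 1"
    then have "{0<..<\<tau>} \<subseteq> ?T" by auto
    then show ?thesis using infinite_Ioo[OF \<tau>(1)] infinite_super by blast
  next
    assume "s = -1"
    then have "{-\<tau><..<0} \<subseteq> ?T" by auto
    moreover have "-\<tau> < 0" using \<tau>(1) by simp
    ultimately show ?thesis using infinite_Ioo infinite_super by blast
  qed
  moreover have "inj_on (rt u) ?T" using rt_inj[OF uS] by (simp add: inj_on_def inj_def)
  ultimately have "infinite (rt u ` ?T)" using finite_imageD by blast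
  then have "\<not> rt u ` ?T \<subseteq> semicircle v \<inter> stable_set U" using fin finite_subset by blast
  then obtain t where t: "t \<in> ?T" "rt u t \<notin> semicircle v \<inter> stable_set U" by blast
  have near: "rt u t \<in> semicircle v" "\<forall>y\<in>\<Union>U. 0 < ip y u \<longrightarrow> 0 < ip y (rt u t)"
    using \<tau>(2) t(1) by simp_all
  have "\<not> stable U (rt u t)" using near(1) t(2) rt_S1[OF uS] by (simp add: stable_set_def)
  then show ?thesis using t(1) near(2) by blast
qed

text \<open>Hence such a semicircle contains no stable irrational direction: rotating a stable
  irrational u slightly keeps every rule stable.\<close>

lemma stable_direction_rational:
  assumes uf: "update_family U" and u: "u \<in> semicircle v" and st: "stable U u"
    and fin: "finite (semicircle v \<inter> stable_set U)"
  shows "u \<in> Q1"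
proof (rule ccontr)
  assume irr: "u \<notin> Q1"
  have uS: "u \<in> S1" using u by (simp add: semicircle_def)
  obtain t where t: "\<not> stable U (rt u t)" "\<forall>y\<in>\<Union>U. 0 < ip y u \<longrightarrow> 0 < ip y (rt u t)"
    using unstable_rotation[OF uf u fin, of 1] by auto
  have "\<exists>y\<in>X. 0 \<le> ip y (rt u t)" if X: "X \<in> U" for X
  proof -
    obtain y where y: "y \<in> X" "0 \<le> ip y u" using st stable_iff[OF uf] X by blast
    have "y \<noteq> (0,0)" using uf X y by (auto simp: update_family_def)
    then have "ip y u \<noteq> 0" by (rule ip_irrational_nonzero[OF uS irr])
    then have "0 < ip y u" using y(2) by simp
    moreover have "y \<in> \<Union>U" using X y(1) by blast
    ultimately have "0 < ip y (rt u t)" using t(2) by blast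
    then show ?thesis using y(1) by (intro bexI[of _ y]) simp_all
  qed
  then have "stable U (rt u t)" using stable_iff[OF uf] by blast
  then show False using t(1) by contradiction
qed

text \<open>For u in such a semicircle and either side s of l_u, the rule which makes the rotation
  of u towards s unstable lies in H_u apart from sites of l_u strictly on side s.\<close>

lemma rule_eating_along_line:
  assumes uf: "update_family U" and u: "u \<in> semicircle v"
    and fin: "finite (semicircle v \<inter> stable_set U)" and s: "\<bar>s\<bar> = (1::real)"
  shows "\<exists>X\<in>U. \<forall>y\<in>X. ip y u < 0 \<or> (ip y u = 0 \<and> 0 < s * ip y (rdir u))"
proof -
  obtain t where t: "0 < s * t" "\<not> stable U (rt u t)"
      and pos: "\<forall>y\<in>\<Union>U. 0 < ip y u \<longrightarrow> 0 < ip y (rt u t)"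
    using unstable_rotation[OF uf u fin s] by blast
  obtain X where X: "X \<in> U" "\<forall>y\<in>X. ip y (rt u t) < 0"
    using t(2) stable_iff[OF uf] by (meson not_le)
  have "ip y u < 0 \<or> (ip y u = 0 \<and> 0 < s * ip y (rdir u))" if y: "y \<in> X" for y
  proof -
    have neg: "ip y u - t * ip y (rdir u) < 0"
      using X(2) y sqrt_one_plus_sq_pos[of t] by (simp add: ip_rt divide_less_0_iff)
    have "\<not> 0 < ip y u" using pos X y by fastforce
    moreover have "0 < s * ip y (rdir u)" if "ip y u = 0"
      using neg that t(1) by (smt (verit) zero_less_mult_iff)
    ultimately show ?thesis by linarith
  qed
  then show ?thesis using X(1) by blast
qed

text \<open>Infection along l_u: if a rule X lies in H_u apart from sites of l_u whose
  (additive) coordinate q lies in [delta, L], then a closed set containing H_u and the seed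
  of sites of l_u with q in (0, L] contains all sites of l_u with q at most L.
  By induction on n, every such site with q > L - n delta is infected.\<close>

lemma halfline_infection:
  fixes q :: "site \<Rightarrow> real"
  assumes closed: "closed_under U A" and X: "X \<in> U" and H: "halfplane u \<subseteq> A"
    and \<delta>: "0 < \<delta>" and q_add: "\<And>x y. q (vadd x y) = q x + q y"
    and Xq: "\<forall>y\<in>X. ip y u < 0 \<or> (ip y u = 0 \<and> \<delta> \<le> q y \<and> q y \<le> L)"
    and seed: "{x \<in> line u. 0 < q x \<and> q x \<le> L} \<subseteq> A"
  shows "{x \<in> line u. q x \<le> L} \<subseteq> A"
proof -
  have "\<forall>x\<in>line u. q x \<le> L \<and> L - real n * \<delta> < q x \<longrightarrow> x \<in> A" for n
  proof (induction n)
    case 0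
    then show ?case by auto
  next
    case (Suc n)
    show ?case
    proof (intro ballI impI)
      fix x assume x: "x \<in> line u" and b: "q x \<le> L \<and> L - real (Suc n) * \<delta> < q x"
      show "x \<in> A"
      proof (cases "0 < q x")
        case True
        then show ?thesis using seed x b by blast
      next
        case False
        have "vadd x y \<in> A" if y: "y \<in> X" for y
        proof (cases "ip y u < 0")
          case True
          then have "vadd x y \<in> halfplane u" using x by (simp add: halfplane_def line_def)
          then show ?thesis using H by blast
        next
          case False
          then have "ip y u = 0" "\<delta> \<le> q y" "q y \<le> L" using Xq y by auto
          moreover from this have "q (vadd x y) \<le> L" "L - real n * \<delta> < q (vadd x y)"
            using q_add b \<open>\<not> 0 < q x\<close> by (auto simp: algebra_simps)
          moreover have "vadd x y \<in> line u" using x \<open>ip y u = 0\<close> by (simp add: line_def)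
          ultimately show ?thesis using Suc.IH by blast
        qed
        then show ?thesis using closed X unfolding closed_under_def by blast
      qed
    qed
  qed
  moreover have "\<exists>n. L - q x < real n * \<delta>" for x
    using reals_Archimedean3[OF \<delta>] by blast
  ultimately show ?thesis by (smt (verit) mem_Collect_eq subsetI)
qed

lemma finite_seed_infects_halfline:
  assumes uf: "update_family U" and uS: "u \<in> S1" and X: "X \<in> U" and s: "\<bar>s\<bar> = (1::real)"
    and Xs: "\<forall>y\<in>X. ip y u < 0 \<or> (ip y u = 0 \<and> 0 < s * ip y (rdir u))"
  shows "\<exists>Z. finite Z \<and> {x \<in> line u. s * ip x (rdir u) \<le> 0} \<subseteq> closure_U U (halfplane u \<union> Z)"
proof -
  define q where "q x = s * ip x (rdir u)" for x
  define Q where "Q = q ` {y\<in>X. ip y u = 0}"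
  have "finite X" using uf X by (auto simp: update_family_def)
  then have finQ: "finite Q" unfolding Q_def by simp
  define L where "L = Max (insert 0 Q)"
  define \<delta> where "\<delta> = Min (insert 1 Q)"
  have \<delta>: "0 < \<delta>" using finQ Xs by (auto simp: \<delta>_def Q_def q_def)
  have Xq: "\<forall>y\<in>X. ip y u < 0 \<or> (ip y u = 0 \<and> \<delta> \<le> q y \<and> q y \<le> L)"
    using Xs finQ by (force simp: L_def \<delta>_def Q_def)
  define Z where "Z = {x\<in>line u. 0 < q x \<and> q x \<le> L}"
  have "\<bar>ip x (rdir u)\<bar> = \<bar>q x\<bar>" for x using s by (simp add: q_def abs_mult)
  then have "Z \<subseteq> {x. \<bar>ip x u\<bar> \<le> 0 \<and> \<bar>ip x (rdir u)\<bar> \<le> L}"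
    by (auto simp: Z_def line_def)
  then have "finite Z" using box_finite[OF uS] finite_subset by blast
  moreover have "{x \<in> line u. q x \<le> L} \<subseteq> closure_U U (halfplane u \<union> Z)"
    using closure_U_closed[OF uf] X _ \<delta> _ Xq
  proof (rule halfline_infection)
    show "halfplane u \<subseteq> closure_U U (halfplane u \<union> Z)"
      "{x \<in> line u. 0 < q x \<and> q x \<le> L} \<subseteq> closure_U U (halfplane u \<union> Z)"
      using closure_U_superset[of "halfplane u \<union> Z" U] by (auto simp: Z_def)
  qed (simp add: q_def algebra_simps)
  moreover have "0 \<le> L" using finQ by (simp add: L_def)
  ultimately show ?thesis unfolding q_def by fastforce
qed

lemma alpha_plus_bound:
  assumes "u \<in> Q1" and "line_plus u \<subseteq> closure_U U (halfplane u \<union> Z)"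
  shows "alpha_plus U u \<le> ecard Z"
proof -
  have "infinite (line_plus u)" using infinite_halfline[OF assms(1), of 1] by (simp add: line_plus_eq)
  then have inf: "infinite (closure_U U (halfplane u \<union> Z) \<inter> line_plus u)"
    using assms(2) by (simp add: Int_absorb1)
  show ?thesis unfolding alpha_plus_def by (rule Inf_lower) (use inf in blast)
qed

lemma alpha_minus_bound:
  assumes "u \<in> Q1" and "line_minus u \<subseteq> closure_U U (halfplane u \<union> Z)"
  shows "alpha_minus U u \<le> ecard Z"
proof -
  have "u \<in> S1" using assms(1) by (simp add: Q1_def)
  then have "infinite (line_minus u)" using infinite_halfline[OF assms(1), of "-1"] by (simp add: line_minus_eq)
  then have inf: "infinite (closure_U U (halfplane u \<union> Z) \<inter> line_minus u)"
    using assms(2) by (simp add: Int_absorb1)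
  show ?thesis unfolding alpha_minus_def by (rule Inf_lower) (use inf in blast)
qed

lemma enat_le_finite: "(a::enat) \<le> b \<Longrightarrow> b \<noteq> \<infinity> \<Longrightarrow> a \<noteq> \<infinity>"
  using top.extremum_unique by fastforce

text \<open>Every rational direction of a semicircle with finitely many stable directions has
  finite alpha (whether stable or not): on each side a rule eats along l_u from a finite seed.\<close>

lemma alpha_finite_rational:
  assumes uf: "update_family U" and u: "u \<in> semicircle v" and q: "u \<in> Q1"
    and fin: "finite (semicircle v \<inter> stable_set U)"
  shows "alpha U u \<noteq> \<infinity>"
proof -
  have uS: "u \<in> S1" using u by (simp add: semicircle_def)
  have seed: "\<exists>Z. finite Z \<and> {x \<in> line u. s * ip x (rdir u) \<le> 0} \<subseteq> closure_U U (halfplane u \<union> Z)"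
    if s: "\<bar>s\<bar> = 1" for s
  proof -
    obtain X where "X \<in> U" "\<forall>y\<in>X. ip y u < 0 \<or> (ip y u = 0 \<and> 0 < s * ip y (rdir u))"
      using rule_eating_along_line[OF uf u fin s] by blast
    then show ?thesis using finite_seed_infects_halfline[OF uf uS _ s] by blast
  qed
  obtain Zp where Zp: "finite Zp" "{x \<in> line u. (-1) * ip x (rdir u) \<le> 0} \<subseteq> closure_U U (halfplane u \<union> Zp)"
    using seed[of "-1"] by auto
  obtain Zm where Zm: "finite Zm" "{x \<in> line u. 1 * ip x (rdir u) \<le> 0} \<subseteq> closure_U U (halfplane u \<union> Zm)"
    using seed[of 1] by auto
  have "alpha_plus U u \<le> ecard Zp"
    using Zp(2) by (intro alpha_plus_bound[OF q]) (simp add: line_plus_eq)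
  moreover have "alpha_minus U u \<le> ecard Zm"
    using Zm(2) by (intro alpha_minus_bound[OF q]) (simp add: line_minus_eq[OF uS])
  moreover have "ecard Zp \<noteq> \<infinity>" "ecard Zm \<noteq> \<infinity>" using Zp(1) Zm(1) by (simp_all add: ecard_def)
  ultimately show ?thesis using q by (auto simp: alpha_def min_def dest: enat_le_finite)
qed

text \<open>An unstable direction has alpha zero: the empty set already infects all of l_u.\<close>

lemma alpha_unstable:
  assumes uf: "update_family U" and ns: "\<not> stable U u"
  shows "alpha U u = 0"
proof (cases "u \<in> Q1")
  case True
  have line: "line u \<subseteq> closure_U U (halfplane u \<union> {})" using unstable_line[OF uf ns] .
  have "line_plus u \<subseteq> closure_U U (halfplane u \<union> {})"
    using line by (auto simp: line_plus_def)
  from alpha_plus_bound[OF True this] have "alpha_plus U u = 0"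
    by (simp add: ecard_def flip: zero_enat_def)
  have "line_minus u \<subseteq> closure_U U (halfplane u \<union> {})"
    using line by (auto simp: line_minus_def line_plus_def line_def ip_def)
  from alpha_minus_bound[OF True this] have "alpha_minus U u = 0"
    by (simp add: ecard_def flip: zero_enat_def)
  with \<open>alpha_plus U u = 0\<close> show ?thesis using True by (simp add: alpha_def)
next
  case False
  then show ?thesis using ns by (simp add: alpha_def)
qed

text \<open>Criticality gives a semicircle with finitely many stable directions; each of them has
  finite alpha and all others have alpha zero, so alpha(U) is finite.\<close>

lemma alpha_family_finite:
  assumes uf: "update_family U" and cr: "critical U"
  shows "alpha_family U \<noteq> \<infinity>"
proof -
  obtain v where v: "v \<in> S1" "finite (semicircle v \<inter> stable_set U)"
    using cr by (auto simp: critical_def)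
  define F where "F = semicircle v \<inter> stable_set U"
  define N where "N = Max (insert 0 (alpha U ` F))"
  have finF: "finite F" using v by (simp add: F_def)
  have "alpha U u \<noteq> \<infinity>" if "u \<in> F" for u
    using that alpha_finite_rational[OF uf _ _ v(2)] stable_direction_rational[OF uf _ _ v(2)]
    by (auto simp: F_def stable_set_def)
  moreover have "N \<in> insert 0 (alpha U ` F)" unfolding N_def using finF by (intro Max_in) auto
  ultimately have Nfin: "N \<noteq> \<infinity>" by (auto simp: zero_enat_def)
  have "alpha U u \<le> N" if u: "u \<in> semicircle v" for u
  proof (cases "u \<in> F")
    case True
    then show ?thesis unfolding N_def using finF by (intro Max_ge) auto
  next
    case False
    then have "\<not> stable U u" using u by (auto simp: F_def stable_set_def semicircle_def)
    then show ?thesis using alpha_unstable[OF uf] by simp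
  qed
  then have "(SUP u\<in>semicircle v. alpha U u) \<le> N" by (rule SUP_least)
  moreover have "alpha_family U \<le> (SUP u\<in>semicircle v. alpha U u)"
    unfolding alpha_family_def using v(1) by (rule INF_lower)
  ultimately show ?thesis using Nfin enat_le_finite order_trans by blast
qed

lemma voracious_finite:
  assumes "update_family U" "critical U" "alpha U u \<le> alpha_family U" "voracious U u Z"
  shows "finite Z"
proof -
  have "ecard Z \<le> alpha_family U" using assms(3,4) by (auto simp: voracious_def)
  then have "ecard Z \<noteq> \<infinity>" using alpha_family_finite[OF assms(1,2)] enat_le_finite by blast
  then show ?thesis by (auto simp: ecard_def split: if_splits)
qed

section \<open>Periodicity of the closure along l_u\<close>

definition lcoord :: "dir \<Rightarrow> site \<Rightarrow> site \<Rightarrow> real" where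
  "lcoord u e x = ip x (rdir u) / ip e (rdir u)"

lemma lcoord_vadd: "lcoord u e (vadd x y) = lcoord u e x + lcoord u e y"
  by (simp add: lcoord_def add_divide_distrib)

lemma lcoord_vscale: "lcoord u e (vscale k x) = of_int k * lcoord u e x"
  by (simp add: lcoord_def)

lemma lcoord_self: "ip e (rdir u) \<noteq> 0 \<Longrightarrow> lcoord u e e = 1"
  by (simp add: lcoord_def)

lemma halfplane_translate:
  assumes "v \<in> line u"
  shows "vadd v ` halfplane u = halfplane u"
proof
  show "vadd v ` halfplane u \<subseteq> halfplane u"
    using assms by (auto simp: halfplane_def line_def)
  show "halfplane u \<subseteq> vadd v ` halfplane u"
  proof
    fix x assume "x \<in> halfplane u"
    moreover have "ip (vadd (-fst v, -snd v) x) u = ip x u - ip v u"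
      by (simp add: ip_def vadd_def algebra_simps)
    ultimately have "vadd (-fst v, -snd v) x \<in> halfplane u"
      using assms by (simp add: halfplane_def line_def)
    then show "x \<in> vadd v ` halfplane u" by (metis rev_image_eqI vadd_neg_cancel(2))
  qed
qed

text \<open>For a stable direction, the closure of H_u and a finite set stays at bounded height:
  a half-plane bounded away from l_u is closed under U.\<close>

lemma closure_height_bound:
  assumes uf: "update_family U" and st: "stable U u" and fin: "finite Z"
  shows "\<exists>M. \<forall>x\<in>closure_U U (halfplane u \<union> Z). ip x u \<le> M"
proof -
  define M where "M = Max (insert 0 ((\<lambda>z. ip z u) ` Z))"
  have closed: "closed_under U {x. ip x u \<le> M}"
    unfolding closed_under_def
  proof (intro allI ballI impI)
    fix x X assume X: "X \<in> U" and sub: "vadd x ` X \<subseteq> {x. ip x u \<le> M}"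
    obtain y where y: "y \<in> X" "0 \<le> ip y u" using st stable_iff[OF uf] X by blast
    then have "ip (vadd x y) u \<le> M" using sub by blast
    then show "x \<in> {x. ip x u \<le> M}" using y(2) by simp
  qed
  have "0 \<le> M" "\<forall>z\<in>Z. ip z u \<le> M" using fin by (auto simp: M_def)
  then have "halfplane u \<union> Z \<subseteq> {x. ip x u \<le> M}"
    by (auto simp: halfplane_def)
  with closed have "closure_U U (halfplane u \<union> Z) \<subseteq> {x. ip x u \<le> M}"
    by (rule closure_U_least)
  then show ?thesis by blast
qed

definition window :: "site set \<Rightarrow> site set \<Rightarrow> (site \<Rightarrow> real) \<Rightarrow> real \<Rightarrow> real \<Rightarrow> site set" where
  "window A S \<sigma> \<rho> s = (A - S) \<inter> {x. s - \<rho> \<le> \<sigma> x \<and> \<sigma> x < s}"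

text \<open>Determinism: if every rule reaches back at most rho in an additive coordinate sigma and the
  seed Z lies below level s, then beyond level s the closure of S and Z is already generated by S
  together with the window at level s.  (The sites below s together with the closure of S and
  the window form a closed set containing S and Z.)\<close>

lemma closure_determined_by_window:
  fixes \<sigma> :: "site \<Rightarrow> real"
  assumes uf: "update_family U" and \<sigma>_add: "\<And>x y. \<sigma> (vadd x y) = \<sigma> x + \<sigma> y"
    and \<rho>: "\<forall>X\<in>U. \<forall>y\<in>X. - \<rho> \<le> \<sigma> y" and Zs: "\<forall>z\<in>Z. \<sigma> z < s"
    and x: "x \<in> closure_U U (S \<union> Z)" "s \<le> \<sigma> x"
  shows "x \<in> closure_U U (S \<union> window (closure_U U (S \<union> Z)) S \<sigma> \<rho> s)"
proof -
  define A where "A = closure_U U (S \<union> Z)"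
  define C where "C = closure_U U (S \<union> window A S \<sigma> \<rho> s)"
  define F where "F = C \<union> (A \<inter> {x. \<sigma> x < s})"
  have "S \<union> window A S \<sigma> \<rho> s \<subseteq> A"
    using closure_U_superset[of "S \<union> Z" U] by (auto simp: A_def window_def)
  then have CA: "C \<subseteq> A" unfolding C_def A_def by (rule closure_U_subset_closure[OF uf])
  have SC: "S \<subseteq> C" using closure_U_superset[of "S \<union> window A S \<sigma> \<rho> s" U] by (auto simp: C_def)
  have "closed_under U F"
    unfolding closed_under_def
  proof (intro allI ballI impI)
    fix x X assume X: "X \<in> U" and sub: "vadd x ` X \<subseteq> F"
    show "x \<in> F"
    proof (cases "\<sigma> x < s")
      case True
      have "vadd x ` X \<subseteq> A" using sub CA by (auto simp: F_def)
      then show ?thesis using True closure_U_infects[OF uf X] by (simp add: F_def A_def)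
    next
      case False
      have "vadd x y \<in> C" if y: "y \<in> X" for y
      proof -
        have "s - \<rho> \<le> \<sigma> (vadd x y)" using \<rho> X y False \<sigma>_add[of x y] by fastforce
        moreover have "vadd x y \<in> F" using sub y by blast
        ultimately have "vadd x y \<in> C \<or> vadd x y \<in> S \<or> vadd x y \<in> window A S \<sigma> \<rho> s"
          by (auto simp: F_def window_def)
        then show ?thesis using SC closure_U_superset[of "S \<union> window A S \<sigma> \<rho> s" U]
          by (auto simp: C_def)
      qed
      then have "x \<in> C" unfolding C_def using closure_U_infects[OF uf X] by blast
      then show ?thesis by (simp add: F_def)
    qed
  qed
  moreover have "S \<union> Z \<subseteq> F"
    using SC Zs closure_U_superset[of "S \<union> Z" U] by (auto simp: F_def A_def)
  ultimately have "A \<subseteq> F" unfolding A_def by (rule closure_U_least)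
  then show ?thesis using x by (auto simp: F_def A_def C_def)
qed

lemma window_shift:
  fixes \<sigma> :: "site \<Rightarrow> real"
  assumes uf: "update_family U" and v: "v \<in> line u"
    and \<sigma>_add: "\<And>x y. \<sigma> (vadd x y) = \<sigma> x + \<sigma> y"
    and \<rho>: "\<forall>X\<in>U. \<forall>y\<in>X. - \<rho> \<le> \<sigma> y" and Zs: "\<forall>z\<in>Z. \<sigma> z < t"
    and shift: "window (closure_U U (halfplane u \<union> Z)) (halfplane u) \<sigma> \<rho> t'
              = vadd v ` window (closure_U U (halfplane u \<union> Z)) (halfplane u) \<sigma> \<rho> t"
    and x: "x \<in> closure_U U (halfplane u \<union> Z)" "t \<le> \<sigma> x"
  shows "vadd v x \<in> closure_U U (halfplane u \<union> Z)"
proof -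
  let ?A = "closure_U U (halfplane u \<union> Z)"
  let ?W = "\<lambda>t. window ?A (halfplane u) \<sigma> \<rho> t"
  have "x \<in> closure_U U (halfplane u \<union> ?W t)"
    by (rule closure_determined_by_window[OF uf \<sigma>_add \<rho> Zs x])
  then have "vadd v x \<in> vadd v ` closure_U U (halfplane u \<union> ?W t)" by blast
  also have "\<dots> = closure_U U (vadd v ` (halfplane u \<union> ?W t))"
    by (rule closure_U_translate[OF uf, symmetric])
  also have "\<dots> = closure_U U (halfplane u \<union> ?W t')"
    by (simp add: image_Un halfplane_translate[OF v] shift)
  also have "\<dots> \<subseteq> ?A"
    using closure_U_superset[of "halfplane u \<union> Z" U]
    by (intro closure_U_subset_closure[OF uf]) (auto simp: window_def)
  finally show ?thesis .
qed

lemma subsets_of_finite_repeat: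
  assumes "finite B" and "\<And>n::nat. f n \<subseteq> B"
  shows "\<exists>n m. n < m \<and> f n = f m"
proof -
  have "finite (range f)" using assms by (meson Pow_iff finite_Pow_iff finite_subset image_subsetI)
  then have "\<not> inj f" using finite_imageD infinite_UNIV_nat by blast
  then show ?thesis by (metis injI linorder_neqE_nat)
qed

lemma shift_orbit:
  fixes \<sigma> :: "site \<Rightarrow> real"
  assumes step: "\<And>x. x \<in> A \<Longrightarrow> t \<le> \<sigma> x \<Longrightarrow> vadd v x \<in> A"
    and \<sigma>_add: "\<And>x y. \<sigma> (vadd x y) = \<sigma> x + \<sigma> y" and v: "0 \<le> \<sigma> v"
    and a: "a \<in> A" "t \<le> \<sigma> a"
  shows "vadd a (vscale (int j) v) \<in> A"
proof -
  have "vadd a (vscale (int j) v) \<in> A \<and> t \<le> \<sigma> (vadd a (vscale (int j) v))"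
  proof (induction j)
    case 0
    then show ?case using a by (simp add: vscale_def vadd_def)
  next
    case (Suc j)
    have eq: "vadd a (vscale (int (Suc j)) v) = vadd v (vadd a (vscale (int j) v))"
      by (simp add: vadd_def vscale_def algebra_simps)
    let ?y = "vadd a (vscale (int j) v)"
    have "vadd v ?y \<in> A" using Suc step by blast
    moreover have "t \<le> \<sigma> (vadd v ?y)" using Suc v \<sigma>_add[of v ?y] by simp
    ultimately show ?case unfolding eq ..
  qed
  then show ?thesis ..
qed

text \<open>At bounded height, the windows at levels s + n, translated back by n e, all lie in one
  finite box; so only finitely many window shapes occur.\<close>

lemma shifted_windows_finite:
  assumes uS: "u \<in> S1" and e: "e \<in> line u" "ip e (rdir u) \<noteq> 0" and M: "\<forall>x\<in>A. ip x u \<le> M"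
  shows "finite (\<Union>n::nat. vadd (vscale (- int n) e) ` window A (halfplane u) (lcoord u e) \<rho> (s + real n))"
    (is "finite ?V")
proof -
  let ?B = "{x. \<bar>ip x u\<bar> \<le> \<bar>M\<bar> \<and> \<bar>ip x (rdir u)\<bar> \<le> (\<bar>s - \<rho>\<bar> + \<bar>s\<bar>) * \<bar>ip e (rdir u)\<bar>}"
  have "?V \<subseteq> ?B"
  proof
    fix z assume "z \<in> ?V"
    then obtain n :: nat and x where x: "x \<in> window A (halfplane u) (lcoord u e) \<rho> (s + real n)"
      and z: "z = vadd (vscale (- int n) e) x" by blast
    have "lcoord u e z = lcoord u e x - real n"
      using e(2) by (simp add: z lcoord_vadd lcoord_vscale lcoord_self)
    then have "\<bar>lcoord u e z\<bar> \<le> \<bar>s - \<rho>\<bar> + \<bar>s\<bar>" using x by (auto simp: window_def)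
    moreover have "ip z (rdir u) = lcoord u e z * ip e (rdir u)" using e(2) by (simp add: lcoord_def)
    ultimately have "\<bar>ip z (rdir u)\<bar> \<le> (\<bar>s - \<rho>\<bar> + \<bar>s\<bar>) * \<bar>ip e (rdir u)\<bar>"
      by (simp add: abs_mult mult_right_mono)
    moreover have "ip z u = ip x u" using e(1) by (simp add: z line_def)
    moreover have "0 \<le> ip x u" "ip x u \<le> M" using x M by (auto simp: window_def halfplane_def)
    ultimately show "z \<in> ?B" by auto
  qed
  then show ?thesis using box_finite[OF uS] finite_subset by blast
qed

text \<open>Beyond the seed, A is determined by its windows; at bounded
  height two windows, n and m levels beyond the seed, coincide up to translation by (m - n) e, and
  then A is invariant under this translation beyond level n.\<close>

lemma closure_periodic_along_line:
  assumes uf: "update_family U" and uS: "u \<in> S1" and st: "stable U u" and fin: "finite Z"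
    and e: "e \<in> line u" "ip e (rdir u) \<noteq> 0"
    and unb: "\<forall>T. \<exists>x\<in>closure_U U (halfplane u \<union> Z) \<inter> line u. T < lcoord u e x"
  shows "\<exists>a\<in>closure_U U (halfplane u \<union> Z) \<inter> line u. \<exists>k::nat. 1 \<le> k \<and>
           (\<forall>j::nat. vadd a (vscale (int j) (vscale (int k) e)) \<in> closure_U U (halfplane u \<union> Z))"
proof -
  define A where "A = closure_U U (halfplane u \<union> Z)"
  define \<sigma> where "\<sigma> = lcoord u e"
  have \<sigma>_add: "\<And>x y. \<sigma> (vadd x y) = \<sigma> x + \<sigma> y" by (simp add: \<sigma>_def lcoord_vadd)
  obtain M where M: "\<forall>x\<in>A. ip x u \<le> M" using closure_height_bound[OF uf st fin] A_def by blast
  define \<rho> where "\<rho> = Max (insert 0 ((\<lambda>y. \<bar>\<sigma> y\<bar>) ` \<Union>U))"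
  have "finite (\<Union>U)" using uf by (auto simp: update_family_def)
  then have "\<bar>\<sigma> y\<bar> \<le> \<rho>" if "y \<in> \<Union>U" for y
    unfolding \<rho>_def using that by (intro Max_ge) auto
  then have \<rho>: "\<forall>X\<in>U. \<forall>y\<in>X. - \<rho> \<le> \<sigma> y" by (fastforce simp: abs_le_iff)
  define s where "s = Max (insert 0 (\<sigma> ` Z)) + 1"
  have "\<sigma> z \<le> s - 1" if "z \<in> Z" for z
    unfolding s_def using fin that by (simp add: Max_ge)
  then have Zs: "\<forall>z\<in>Z. \<sigma> z < s + real n" for n
    by (smt (verit) of_nat_0_le_iff)
  define W where "W t = window A (halfplane u) \<sigma> \<rho> t" for t
  obtain n m :: nat where nm: "n < m"
    and eq: "vadd (vscale (- int n) e) ` W (s + real n) = vadd (vscale (- int m) e) ` W (s + real m)"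
    using subsets_of_finite_repeat[OF shifted_windows_finite[OF uS e M, of \<rho> s],
        of "\<lambda>n. vadd (vscale (- int n) e) ` W (s + real n)"]
    unfolding W_def \<sigma>_def by blast
  define v where "v = vscale (int (m - n)) e"
  have "W (s + real m) = vadd (vscale (int m) e) ` vadd (vscale (- int m) e) ` W (s + real m)"
    by (simp add: image_image vadd_def vscale_def)
  also have "\<dots> = vadd v ` W (s + real n)"
    unfolding eq[symmetric] vadd_image_vadd vscale_add v_def using nm by (simp add: of_nat_diff)
  finally have shift: "W (s + real m) = vadd v ` W (s + real n)" .
  have "v \<in> line u" unfolding v_def by (rule line_vscale[OF e(1)])
  from window_shift[OF uf this \<sigma>_add \<rho> Zs[of n] shift[unfolded W_def A_def]]
  have step: "vadd v x \<in> A" if "x \<in> A" "s + real n \<le> \<sigma> x" for x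
    using that unfolding A_def by blast
  obtain a where a: "a \<in> A \<inter> line u" "s + real n \<le> \<sigma> a"
    using unb unfolding A_def \<sigma>_def by (meson less_imp_le)
  have "0 \<le> \<sigma> v" using e(2) nm by (simp add: \<sigma>_def v_def lcoord_vscale lcoord_self)
  then have "vadd a (vscale (int j) v) \<in> A" for j
    using shift_orbit[OF step \<sigma>_add _ _ a(2)] a(1) by blast
  then show ?thesis using a(1) nm unfolding A_def v_def by (intro bexI[of _ a] exI[of _ "m - n"]) auto
qed

section \<open>Semi-periodicity\<close>

text \<open>A subset of l_u containing an arithmetic progression a + j k e (j = 0, 1, ...) is
  semi-periodic: a multiple of every site on e's side of l_u is a non-negative multiple of e.\<close>

lemma semi_periodic_of_progression:
  assumes uS: "u \<in> S1" and Y: "Y \<subseteq> line u" and e: "e \<in> line u" "ip e (rdir u) \<noteq> 0"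
    and a: "a \<in> line u" and k: "1 \<le> k"
    and prog: "\<forall>j::nat. vadd a (vscale (int j) (vscale k e)) \<in> Y"
  shows "semi_periodic u Y"
proof -
  obtain N where N: "1 \<le> N"
    "\<forall>x\<in>line u. 0 \<le> ip x (rdir u) * ip e (rdir u) \<longrightarrow> (\<exists>c::nat. vscale N x = vscale (int c) e)"
    using halfline_multiple[OF uS e] by blast
  define P where "P = (if 0 < ip e (rdir u) then line_plus u else line_minus u)"
  have "x \<in> line u \<and> 0 \<le> ip x (rdir u) * ip e (rdir u)" if "x \<in> P" for x
    using that e(2) by (cases "0 < ip e (rdir u)")
      (auto simp: P_def line_plus_eq line_minus_eq[OF uS] zero_le_mult_iff)
  then have "(vadd a \<circ> vscale (k * N)) ` P \<subseteq> Y"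
  proof (clarsimp)
    fix x assume "x \<in> P"
    then obtain c :: nat where "vscale N x = vscale (int c) e"
      using N(2) \<open>\<And>x. x \<in> P \<Longrightarrow> _\<close> by blast
    then have "vscale (k * N) x = vscale (int c) (vscale k e)"
      by (metis mult.commute vscale_vscale)
    then show "vadd a (vscale (k * N) x) \<in> Y" using prog by simp
  qed
  moreover have "1 \<le> k * N" using mult_mono[OF k N(1)] k by simp
  ultimately show ?thesis
    using Y a unfolding semi_periodic_def P_def by (intro conjI bexI[of _ a] exI[of _ "k * N"]) (auto split: if_splits)
qed

lemma unbounded_direction:
  assumes q: "u \<in> Q1" and Y: "Y \<subseteq> line u" "infinite Y"
  shows "\<exists>e\<in>line u. ip e (rdir u) \<noteq> 0 \<and> (\<forall>T. \<exists>x\<in>Y. T < lcoord u e x)"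
proof -
  have uS: "u \<in> S1" using q by (simp add: Q1_def)
  obtain e0 where e0: "e0 \<in> line u" "0 < ip e0 (rdir u)" using line_dir[OF q] by blast
  have "Y \<subseteq> {x\<in>Y. 0 \<le> of_int 1 * ip x (rdir u)} \<union> {x\<in>Y. 0 \<le> of_int (-1) * ip x (rdir u)}"
    by auto
  then have "infinite {x\<in>Y. 0 \<le> of_int 1 * ip x (rdir u)} \<or>
      infinite {x\<in>Y. 0 \<le> of_int (-1) * ip x (rdir u)}"
    using Y(2) finite_subset finite_UnI by blast
  then obtain c :: int where c: "c = 1 \<or> c = -1" "infinite {x\<in>Y. 0 \<le> of_int c * ip x (rdir u)}"
    by blast
  define e where "e = vscale c e0"
  have lc: "lcoord u e x = of_int c * ip x (rdir u) / ip e0 (rdir u)" for x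
    using c(1) by (auto simp: lcoord_def e_def)
  have "\<exists>x\<in>Y. T < lcoord u e x" for T
  proof -
    let ?Box = "{x. \<bar>ip x u\<bar> \<le> 0 \<and> \<bar>ip x (rdir u)\<bar> \<le> \<bar>T\<bar> * ip e0 (rdir u)}"
    have "\<not> {x\<in>Y. 0 \<le> of_int c * ip x (rdir u)} \<subseteq> ?Box"
      using c(2) box_finite[OF uS] finite_subset by blast
    then obtain x where x: "x \<in> Y" "0 \<le> of_int c * ip x (rdir u)" "x \<notin> ?Box" by blast
    then have "\<bar>T\<bar> * ip e0 (rdir u) < of_int c * ip x (rdir u)"
      using Y(1) c(1) by (auto simp: line_def)
    then have "\<bar>T\<bar> < lcoord u e x" using e0(2) by (simp add: lc pos_less_divide_eq)
    then show ?thesis using x(1) by (intro bexI[of _ x]) auto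
  qed
  moreover have "e \<in> line u" "ip e (rdir u) \<noteq> 0"
    using e0 c(1) line_vscale[OF e0(1)] by (auto simp: e_def)
  ultimately show ?thesis by blast
qed

theorem mainTheorem5:
  fixes U :: "site set set" and u :: dir and Z :: "site set"
  assumes "update_family U"
    and "critical U"
    and "u \<in> Q1"
    and "alpha U u \<le> alpha_family U"
    and "voracious U u Z"
  shows "semi_periodic u (closure_U U (halfplane u \<union> Z) \<inter> line u)"
proof -
  have uS: "u \<in> S1" using assms(3) by (simp add: Q1_def)
  let ?A = "closure_U U (halfplane u \<union> Z)"
  obtain e a k where e: "e \<in> line u" "ip e (rdir u) \<noteq> 0" and a: "a \<in> line u" and k: "1 \<le> k"
    and prog: "\<forall>j::nat. vadd a (vscale (int j) (vscale k e)) \<in> ?A"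
  proof (cases "stable U u")
    case False
    \<comment> \<open>All of l_u is infected: take the progression of all multiples of some e.\<close>
    obtain e where e: "e \<in> line u" "0 < ip e (rdir u)" using line_dir[OF assms(3)] by blast
    have "vadd (0,0) (vscale (int j) (vscale 1 e)) \<in> ?A" for j
      using unstable_line[OF assms(1) False] line_vscale[OF line_vscale[OF e(1)]] by auto
    then show ?thesis using that[of e "(0,0)" 1] e by (simp add: line_def ip_def)
  next
    case True
    \<comment> \<open>Z is finite and A is infinite along l_u, so A contains a progression.\<close>
    have fin: "finite Z" using voracious_finite[OF assms(1,2,4,5)] .
    have "infinite (?A \<inter> line u)" using assms(5) by (simp add: voracious_def)
    then obtain e where e: "e \<in> line u" "ip e (rdir u) \<noteq> 0" "\<forall>T. \<exists>x\<in>?A \<inter> line u. T < lcoord u e x"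
      using unbounded_direction[OF assms(3) Int_lower2] by blast
    then obtain a k where "a \<in> line u" "1 \<le> k"
        "\<forall>j::nat. vadd a (vscale (int j) (vscale (int k) e)) \<in> ?A"
      using closure_periodic_along_line[OF assms(1) uS True fin e] by blast
    then show ?thesis using that[of e a "int k"] e(1,2) by simp
  qed
  moreover have "vadd a (vscale (int j) (vscale k e)) \<in> line u" for j
    using a e(1) by (simp add: line_vadd line_vscale)
  ultimately show ?thesis using semi_periodic_of_progression[OF uS _ e a k] by blast
qed

end
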